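(* Let $p$ be the POP of length 5 defined by the relations $1>2$, $1>3$, $4>2$ and $4>3$ (label $5$ isolated), and let $a(n)=|S_n(p)|$. Then $$\sum_{n\geq 0}a(n)x^n=\frac{1-7x+14x^2-6x^3+4x^4}{(1-4x+2x^2)^2}.$$
   Context: An $n$-permutation is a word $\pi=\pi_1\cdots\pi_n$ containing each of $1,\ldots,n$ exactly once; $S_n$ is the set of $n$-permutations ($S_0$ consists of the empty permutation). A partially ordered pattern (POP) $p$ of length $k$ is a partial order on the label set $\{1,\ldots,k\}$; it is described by a set of generating relations, where a relation $x>y$ means that in an occurrence the entry in the $x$-th chosen position must be larger than the entry in the $y$-th chosen position, and labels not involved in any relation are unconstrained. An $n$-permutation $\pi$ contains $p$ if there are indices $1\leq i_1<\cdots<i_k\leq n$ such that $\pi_{i_x}>\pi_{i_y}$ whenever $x>y$ in the partial order; otherwise $\pi$ avoids $p$. $S_n(p)$ denotes the set of $n$-permutations avoiding $p$. *)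

theory Defs
  imports Main "HOL-Computational_Algebra.Formal_Power_Series"
begin

definition perms :: "nat \<Rightarrow> nat list set" where
  "perms n = {\<pi>. distinct \<pi> \<and> set \<pi> = {1..n}}"

text \<open>A POP of length k is given by its length k and a set R of generating relations;
  (x, y) \<in> R encodes the relation x > y between labels x, y \<in> {1..k}.  Positions are 1-based, so
  \<pi>_j is \<pi> ! (j - 1).\<close>
definition contains_pop :: "nat list \<Rightarrow> nat \<Rightarrow> (nat \<times> nat) set \<Rightarrow> bool" where
  "contains_pop \<pi> k R \<longleftrightarrow>
     (\<exists>i :: nat \<Rightarrow> nat. strict_mono_on {1..k} i \<and> i ` {1..k} \<subseteq> {1..length \<pi>} \<and>
        (\<forall>(x, y) \<in> R. \<pi> ! (i x - 1) > \<pi> ! (i y - 1)))"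

definition avoiding_perms :: "nat \<Rightarrow> nat \<Rightarrow> (nat \<times> nat) set \<Rightarrow> nat list set" where
  "avoiding_perms n k R = {\<pi> \<in> perms n. \<not> contains_pop \<pi> k R}"

definition pop45 :: "(nat \<times> nat) set" where
  "pop45 = {(1, 2), (1, 3), (4, 2), (4, 3)}"

end

theory Submission
  imports Defs
begin

text \<open>
  Label 5 of the pattern is isolated, so it can always be placed at the last position: a
  permutation avoids the pattern iff the word obtained by deleting its last entry avoids the
  length-4 pattern 1>2, 1>3, 4>2, 4>3 (a "double dip"). Hence a(n+1) = (n+1) b(n), where b(n)
  counts double-dip-free arrangements of any n-element set. In such an arrangement one of the two
  smallest entries s1 < s2 must be the first or the last entry (otherwise the two ends and s1, s2
  form a double dip), and deleting a first or last entry that has at most one smaller entry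
  neither creates nor destroys a double dip. Inclusion-exclusion over "begins with s1 or s2" and
  "ends with s1 or s2" gives b(n+2) = 4 b(n+1) - 2 b(n), i.e.
  B(x) (1 - 4x + 2x^2) = 1 - 3x, and the stated series is 1 + x (x B(x))'.
\<close>

text \<open>Positions here are 0-based, unlike in \<open>contains_pop\<close>.\<close>

definition double_dip :: "'a::linorder list \<Rightarrow> bool" where
  "double_dip xs \<longleftrightarrow> (\<exists>a b c d. a < b \<and> b < c \<and> c < d \<and> d < length xs \<and>
     xs ! b < xs ! a \<and> xs ! c < xs ! a \<and> xs ! b < xs ! d \<and> xs ! c < xs ! d)"

definition dip_free :: "'a::linorder set \<Rightarrow> 'a list set" where
  "dip_free S = {xs. distinct xs \<and> set xs = S \<and> \<not> double_dip xs}"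

definition at_most_one_below :: "'a::linorder \<Rightarrow> 'a set \<Rightarrow> bool" where
  "at_most_one_below x S \<longleftrightarrow> (\<forall>y\<in>S. \<forall>z\<in>S. y < x \<longrightarrow> z < x \<longrightarrow> y = z)"

lemma distinct_set_eq_singleton:
  assumes "distinct xs" and "set xs = {x}"
  shows "xs = [x]"
proof -
  have "length xs = 1"
    using distinct_card[OF assms(1)] assms(2) by simp
  then obtain y where "xs = [y]"
    by (auto simp: length_Suc_conv)
  then show ?thesis
    using assms(2) by simp
qed

lemma distinct_hd_neq_last:
  assumes "distinct xs" "2 \<le> length xs"
  shows "hd xs \<noteq> last xs"
proof (cases xs)
  case (Cons y ys)
  then have "ys \<noteq> []"
    using assms(2) by auto
  then have "last xs \<in> set ys"
    using Cons by simp
  then show ?thesis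
    using assms(1) Cons by auto
qed (use assms in simp)

lemma at_most_one_below_subset:
  "at_most_one_below x S \<Longrightarrow> T \<subseteq> S \<Longrightarrow> at_most_one_below x T"
  unfolding at_most_one_below_def by blast

lemma double_dip_Cons: "double_dip xs \<Longrightarrow> double_dip (x # xs)"
  unfolding double_dip_def
  by (elim exE, intro exI[of _ "Suc _"]) auto

lemma double_dip_snoc:
  assumes "double_dip xs"
  shows "double_dip (xs @ [x])"
proof -
  obtain a b c d where "a < b" "b < c" "c < d" "d < length xs"
    "xs ! b < xs ! a" "xs ! c < xs ! a" "xs ! b < xs ! d" "xs ! c < xs ! d"
    using assms unfolding double_dip_def by blast
  then show ?thesis
    unfolding double_dip_def by (intro exI[of _ a] exI[of _ b] exI[of _ c] exI[of _ d]) (simp add: nth_append)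
qed

lemma double_dip_Cons_iff:
  assumes "distinct xs" and "at_most_one_below x (set xs)"
  shows "double_dip (x # xs) \<longleftrightarrow> double_dip xs"
proof
  assume "double_dip (x # xs)"
  then obtain a b c d where "a < b" "b < c" "c < d" "d < length (x # xs)"
    and dip: "(x # xs) ! b < (x # xs) ! a" "(x # xs) ! c < (x # xs) ! a"
      "(x # xs) ! b < (x # xs) ! d" "(x # xs) ! c < (x # xs) ! d"
    unfolding double_dip_def by blast
  obtain b' c' d' where bcd: "b = Suc b'" "c = Suc c'" "d = Suc d'"
    using \<open>a < b\<close> \<open>b < c\<close> \<open>c < d\<close> by (metis Suc_pred gr0I not_less0 order.strict_trans)
  show "double_dip xs"
  proof (cases a)
    case 0
    then have "xs ! b' < x" "xs ! c' < x" "b' < length xs" "c' < length xs"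
      using \<open>b < c\<close> \<open>c < d\<close> \<open>d < length (x # xs)\<close> dip bcd by auto
    then have "xs ! b' = xs ! c'"
      using assms(2) unfolding at_most_one_below_def by auto
    then have "b' = c'"
      using assms(1) \<open>b' < length xs\<close> \<open>c' < length xs\<close> nth_eq_iff_index_eq by blast
    then show ?thesis
      using \<open>b < c\<close> bcd by simp
  next
    case (Suc a')
    then show ?thesis
      unfolding double_dip_def using \<open>a < b\<close> \<open>b < c\<close> \<open>c < d\<close> \<open>d < length (x # xs)\<close> dip bcd
      by (intro exI[of _ a'] exI[of _ b'] exI[of _ c'] exI[of _ d']) simp
  qed
qed (rule double_dip_Cons)

lemma double_dip_snoc_iff:
  assumes "distinct xs" and "at_most_one_below x (set xs)"
  shows "double_dip (xs @ [x]) \<longleftrightarrow> double_dip xs"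
proof
  assume "double_dip (xs @ [x])"
  then obtain a b c d where "a < b" "b < c" "c < d" "d < length (xs @ [x])"
    and dip: "(xs @ [x]) ! b < (xs @ [x]) ! a" "(xs @ [x]) ! c < (xs @ [x]) ! a"
      "(xs @ [x]) ! b < (xs @ [x]) ! d" "(xs @ [x]) ! c < (xs @ [x]) ! d"
    unfolding double_dip_def by blast
  show "double_dip xs"
  proof (cases "d = length xs")
    case True
    then have "xs ! b < x" "xs ! c < x" "b < length xs" "c < length xs"
      using \<open>b < c\<close> \<open>c < d\<close> dip by (auto simp: nth_append)
    then have "xs ! b = xs ! c"
      using assms(2) unfolding at_most_one_below_def by auto
    then have "b = c"
      using assms(1) \<open>b < length xs\<close> \<open>c < length xs\<close> nth_eq_iff_index_eq by blast
    then show ?thesis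
      using \<open>b < c\<close> by simp
  next
    case False
    then show ?thesis
      unfolding double_dip_def using \<open>a < b\<close> \<open>b < c\<close> \<open>c < d\<close> \<open>d < length (xs @ [x])\<close> dip
      by (intro exI[of _ a] exI[of _ b] exI[of _ c] exI[of _ d]) (simp add: nth_append)
  qed
qed (rule double_dip_snoc)

lemma two_smallest_at_an_end:
  assumes "\<not> double_dip xs" "distinct xs" "s1 \<in> set xs" "s2 \<in> set xs" "s1 \<noteq> s2"
    and smallest: "\<forall>y \<in> set xs - {s1, s2}. s1 < y \<and> s2 < y"
  shows "hd xs \<in> {s1, s2} \<or> last xs \<in> {s1, s2}"
proof (rule ccontr)
  assume ends: "\<not> (hd xs \<in> {s1, s2} \<or> last xs \<in> {s1, s2})"
  obtain i j where ij: "i < length xs" "xs ! i = s1" "j < length xs" "xs ! j = s2"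
    using assms(3,4) by (metis in_set_conv_nth)
  define l where "l = length xs - 1"
  have "xs \<noteq> []"
    using assms(3) by auto
  then have "hd xs = xs ! 0" "last xs = xs ! l" "l < length xs"
    unfolding l_def by (simp_all add: hd_conv_nth last_conv_nth)
  have "s1 < hd xs \<and> s2 < hd xs" "s1 < last xs \<and> s2 < last xs"
    using ends \<open>xs \<noteq> []\<close> by (intro smallest[rule_format]; simp)+
  then have hd_big: "s1 < xs ! 0 \<and> s2 < xs ! 0" and last_big: "s1 < xs ! l \<and> s2 < xs ! l"
    using \<open>hd xs = xs ! 0\<close> \<open>last xs = xs ! l\<close> by simp_all
  have "i \<noteq> 0" "j \<noteq> 0" "i \<noteq> l" "j \<noteq> l"
    using ij hd_big last_big by (metis less_irrefl)+
  then have inner: "0 < i" "i < l" "0 < j" "j < l"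
    using ij unfolding l_def by linarith+
  have dip: "double_dip xs" if "0 < p" "p < q" "q < l" "xs ! p \<in> {s1, s2}" "xs ! q \<in> {s1, s2}" for p q
    unfolding double_dip_def using that hd_big last_big \<open>l < length xs\<close>
    by (intro exI[of _ 0] exI[of _ p] exI[of _ q] exI[of _ l]) auto
  have "i \<noteq> j"
    using ij assms(5) by auto
  then have "double_dip xs"
    by (metis dip ij(2,4) inner insertCI linorder_neqE_nat)
  then show False
    using assms(1) by contradiction
qed

lemma finite_dip_free: "finite S \<Longrightarrow> finite (dip_free S)"
  by (rule finite_subset[OF _ finite_lists_length_eq[of S "card S"]])
    (auto simp: dip_free_def distinct_card)

lemma dip_free_hd:
  assumes "x \<in> S" and "at_most_one_below x S"
  shows "{xs \<in> dip_free S. xs \<noteq> [] \<and> hd xs = x} = Cons x ` dip_free (S - {x})"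
proof (intro equalityI subsetI)
  fix xs
  assume "xs \<in> {xs \<in> dip_free S. xs \<noteq> [] \<and> hd xs = x}"
  moreover from this obtain ys where "xs = x # ys"
    by (cases xs) auto
  ultimately show "xs \<in> Cons x ` dip_free (S - {x})"
    unfolding dip_free_def by (auto dest: double_dip_Cons)
next
  fix xs
  assume "xs \<in> Cons x ` dip_free (S - {x})"
  then obtain ys where "xs = x # ys" "distinct ys" "set ys = S - {x}" "\<not> double_dip ys"
    unfolding dip_free_def by blast
  moreover have "at_most_one_below x (set ys)"
    using assms(2) \<open>set ys = S - {x}\<close> by (auto intro: at_most_one_below_subset)
  ultimately show "xs \<in> {xs \<in> dip_free S. xs \<noteq> [] \<and> hd xs = x}"
    unfolding dip_free_def using assms(1) by (auto simp: double_dip_Cons_iff)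
qed

lemma dip_free_last:
  assumes "x \<in> S" and "at_most_one_below x S"
  shows "{xs \<in> dip_free S. xs \<noteq> [] \<and> last xs = x} = (\<lambda>ys. ys @ [x]) ` dip_free (S - {x})"
proof (intro equalityI subsetI)
  fix xs
  assume "xs \<in> {xs \<in> dip_free S. xs \<noteq> [] \<and> last xs = x}"
  moreover from this obtain ys where "xs = ys @ [x]"
    by (cases xs rule: rev_cases) auto
  ultimately show "xs \<in> (\<lambda>ys. ys @ [x]) ` dip_free (S - {x})"
    unfolding dip_free_def by (auto dest: double_dip_snoc)
next
  fix xs
  assume "xs \<in> (\<lambda>ys. ys @ [x]) ` dip_free (S - {x})"
  then obtain ys where "xs = ys @ [x]" "distinct ys" "set ys = S - {x}" "\<not> double_dip ys"
    unfolding dip_free_def by blast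
  moreover have "at_most_one_below x (set ys)"
    using assms(2) \<open>set ys = S - {x}\<close> by (auto intro: at_most_one_below_subset)
  ultimately show "xs \<in> {xs \<in> dip_free S. xs \<noteq> [] \<and> last xs = x}"
    unfolding dip_free_def using assms(1) by (auto simp: double_dip_snoc_iff)
qed

lemma dip_free_hd_last:
  assumes "x \<in> S" "at_most_one_below x S" "t \<in> S" "at_most_one_below t S" "x \<noteq> t"
  shows "{xs \<in> dip_free S. xs \<noteq> [] \<and> hd xs = x \<and> last xs = t}
    = (\<lambda>ys. x # ys @ [t]) ` dip_free (S - {x} - {t})"
proof -
  have "{xs \<in> dip_free S. xs \<noteq> [] \<and> hd xs = x \<and> last xs = t}
      = {xs \<in> {xs \<in> dip_free S. xs \<noteq> [] \<and> hd xs = x}. last xs = t}"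
    by blast
  also have "\<dots> = {xs \<in> Cons x ` dip_free (S - {x}). last xs = t}"
    unfolding dip_free_hd[OF assms(1,2)] ..
  also have "\<dots> = Cons x ` {ys \<in> dip_free (S - {x}). last (x # ys) = t}"
    by blast
  also have "{ys \<in> dip_free (S - {x}). last (x # ys) = t} = {ys \<in> dip_free (S - {x}). ys \<noteq> [] \<and> last ys = t}"
    using assms(5) by auto
  also have "\<dots> = (\<lambda>ys. ys @ [t]) ` dip_free (S - {x} - {t})"
    using assms(3-5) by (intro dip_free_last) (auto intro: at_most_one_below_subset)
  finally show ?thesis
    by (simp add: image_image)
qed

lemma card_dip_free_hd:
  assumes "x \<in> S" and "at_most_one_below x S"
  shows "card {xs \<in> dip_free S. xs \<noteq> [] \<and> hd xs = x} = card (dip_free (S - {x}))"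
  unfolding dip_free_hd[OF assms] by (rule card_image) simp

lemma card_dip_free_last:
  assumes "x \<in> S" and "at_most_one_below x S"
  shows "card {xs \<in> dip_free S. xs \<noteq> [] \<and> last xs = x} = card (dip_free (S - {x}))"
  unfolding dip_free_last[OF assms] by (rule card_image) (simp add: inj_on_def)

lemma card_dip_free_hd_last:
  assumes "x \<in> S" "at_most_one_below x S" "t \<in> S" "at_most_one_below t S" "x \<noteq> t"
  shows "card {xs \<in> dip_free S. xs \<noteq> [] \<and> hd xs = x \<and> last xs = t} = card (dip_free (S - {x} - {t}))"
  unfolding dip_free_hd_last[OF assms] by (rule card_image) (simp add: inj_on_def)

lemma dip_free_hd_neq_last:
  assumes "s1 \<in> S" "s2 \<in> S" "s1 \<noteq> s2" "xs \<in> dip_free S"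
  shows "hd xs \<noteq> last xs"
proof -
  have "card {s1, s2} \<le> card (set xs)"
    using assms by (intro card_mono) (auto simp: dip_free_def)
  then have "2 \<le> length xs"
    using assms distinct_card[of xs] by (simp add: dip_free_def)
  then show ?thesis
    using assms(4) distinct_hd_neq_last unfolding dip_free_def by blast
qed

lemma two_smallest_elements:
  fixes S :: "'a::linorder set"
  assumes "finite S" and "2 \<le> card S"
  obtains s1 s2 where "s1 \<in> S" "s2 \<in> S" "s1 < s2" "\<forall>y \<in> S - {s1, s2}. s2 < y"
proof -
  define s1 where "s1 = Min S"
  define s2 where "s2 = Min (S - {s1})"
  have "S \<noteq> {}"
    using assms(2) by auto
  then have "s1 \<in> S" and s1_le: "\<forall>y \<in> S. s1 \<le> y"
    unfolding s1_def using assms(1) by simp_all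
  then have "card (S - {s1}) \<noteq> 0"
    using assms by simp
  then have "S - {s1} \<noteq> {}"
    by (metis card.empty)
  then have "s2 \<in> S - {s1}" and s2_le: "\<forall>y \<in> S - {s1}. s2 \<le> y"
    unfolding s2_def using assms(1) by (intro Min_in; simp) (use assms(1) in \<open>auto intro!: Min_le\<close>)
  moreover have "s1 < s2"
    using \<open>s2 \<in> S - {s1}\<close> s1_le by (auto simp: order.strict_iff_order)
  ultimately show thesis
    using that[of s1 s2] \<open>s1 \<in> S\<close> by (auto simp: order.strict_iff_order)
qed

lemma at_most_one_below_two_smallest:
  assumes "s1 < s2" and "\<forall>y \<in> S - {s1, s2}. s2 < y"
  shows "at_most_one_below s1 S" "at_most_one_below s2 S"
proof -
  have "y = s1" if "y \<in> S" "y < s2" for y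
    using assms(2) that by (metis DiffI insertE less_asym singletonD)
  then show "at_most_one_below s1 S" "at_most_one_below s2 S"
    using assms(1) unfolding at_most_one_below_def by (metis less_trans)+
qed

lemma card_dip_free_step:
  assumes "finite S" "s1 \<in> S" "s2 \<in> S" "s1 < s2" and smallest: "\<forall>y \<in> S - {s1, s2}. s2 < y"
  shows "card (dip_free S) + 2 * card (dip_free (S - {s1} - {s2}))
    = 2 * card (dip_free (S - {s1})) + 2 * card (dip_free (S - {s2}))"
proof -
  have low: "at_most_one_below s1 S" "at_most_one_below s2 S"
    using at_most_one_below_two_smallest[OF assms(4) smallest] by simp_all
  define H where "H x = {xs \<in> dip_free S. xs \<noteq> [] \<and> hd xs = x}" for x
  define T where "T x = {xs \<in> dip_free S. xs \<noteq> [] \<and> last xs = x}" for x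
  have cover: "dip_free S = (H s1 \<union> H s2) \<union> (T s1 \<union> T s2)"
  proof -
    have "hd xs \<in> {s1, s2} \<or> last xs \<in> {s1, s2}" "xs \<noteq> []" if "xs \<in> dip_free S" for xs
      using that two_smallest_at_an_end[of xs s1 s2] assms less_trans unfolding dip_free_def by fastforce+
    then show ?thesis
      unfolding H_def T_def by blast
  qed
  have hd_last_disjoint: "H x \<inter> T x = {}" for x
    using dip_free_hd_neq_last[OF assms(2,3)] \<open>s1 < s2\<close> unfolding H_def T_def by fastforce
  have overlap: "(H s1 \<union> H s2) \<inter> (T s1 \<union> T s2) = (H s1 \<inter> T s2) \<union> (H s2 \<inter> T s1)"
    using hd_last_disjoint[of s1] hd_last_disjoint[of s2] by blast
  have fin: "finite (H x)" "finite (T x)" for x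
    unfolding H_def T_def using finite_dip_free[OF assms(1)] by simp_all
  have "card (H s1 \<union> H s2) + card (T s1 \<union> T s2)
      = card (dip_free S) + card ((H s1 \<inter> T s2) \<union> (H s2 \<inter> T s1))"
    unfolding cover overlap[symmetric] by (rule card_Un_Int) (simp_all add: fin)
  moreover have "card (H s1 \<union> H s2) = card (dip_free (S - {s1})) + card (dip_free (S - {s2}))"
    using fin \<open>s1 < s2\<close> assms(2,3) low
    by (subst card_Un_disjoint) (auto simp: H_def card_dip_free_hd)
  moreover have "card (T s1 \<union> T s2) = card (dip_free (S - {s1})) + card (dip_free (S - {s2}))"
    using fin \<open>s1 < s2\<close> assms(2,3) low
    by (subst card_Un_disjoint) (auto simp: T_def card_dip_free_last)
  moreover have "card ((H s1 \<inter> T s2) \<union> (H s2 \<inter> T s1))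
      = card (dip_free (S - {s1} - {s2})) + card (dip_free (S - {s2} - {s1}))"
  proof -
    have HT: "H x \<inter> T t = {xs \<in> dip_free S. xs \<noteq> [] \<and> hd xs = x \<and> last xs = t}" for x t
      unfolding H_def T_def by auto
    have "card ((H s1 \<inter> T s2) \<union> (H s2 \<inter> T s1)) = card (H s1 \<inter> T s2) + card (H s2 \<inter> T s1)"
      using fin \<open>s1 < s2\<close> by (intro card_Un_disjoint) (auto simp: H_def)
    then show ?thesis
      unfolding HT using \<open>s1 < s2\<close>
        card_dip_free_hd_last[OF assms(2) low(1) assms(3) low(2)]
        card_dip_free_hd_last[OF assms(3) low(2) assms(2) low(1)] by simp
  qed
  moreover have "S - {s2} - {s1} = S - {s1} - {s2}"
    by blast
  ultimately show ?thesis
    by simp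
qed

fun dip_free_count :: "nat \<Rightarrow> int" where
  "dip_free_count 0 = 1"
| "dip_free_count (Suc 0) = 1"
| "dip_free_count (Suc (Suc n)) = 4 * dip_free_count (Suc n) - 2 * dip_free_count n"

lemma card_dip_free: "finite S \<Longrightarrow> int (card (dip_free S)) = dip_free_count (card S)"
proof (induction "card S" arbitrary: S rule: dip_free_count.induct)
  case 1
  then have "dip_free S = {[]}"
    by (auto simp: dip_free_def double_dip_def)
  then show ?case
    using 1 by simp
next
  case 2
  then obtain x where "S = {x}"
    using card_1_singleton_iff[of S] by auto
  then have "dip_free S = {[x]}"
    by (auto simp: dip_free_def double_dip_def intro: distinct_set_eq_singleton)
  then show ?case
    using 2 by (simp add: \<open>S = {x}\<close>)
next
  case (3 n)
  obtain s1 s2 where s: "s1 \<in> S" "s2 \<in> S" "s1 < s2" "\<forall>y \<in> S - {s1, s2}. s2 < y"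
    using two_smallest_elements[of S] "3.hyps"(3) "3.prems" by auto
  have "card (S - {s1}) = Suc n" "card (S - {s2}) = Suc n" "card (S - {s1} - {s2}) = n"
    using s "3.hyps"(3) "3.prems" by auto
  moreover have "int (card (dip_free S)) + 2 * int (card (dip_free (S - {s1} - {s2})))
      = 2 * int (card (dip_free (S - {s1}))) + 2 * int (card (dip_free (S - {s2})))"
    using arg_cong[OF card_dip_free_step[OF "3.prems" s], of int] by simp
  ultimately show ?case
    using "3.hyps"(1,2) "3.hyps"(3)[symmetric] "3.prems" by simp
qed

lemma contains_pop45_iff: "contains_pop \<pi> 5 pop45 \<longleftrightarrow> double_dip (butlast \<pi>)"
proof
  assume "contains_pop \<pi> 5 pop45"
  then obtain i where mono: "strict_mono_on {1..5} i" and range: "i ` {1..5} \<subseteq> {1..length \<pi>}"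
    and rel: "\<forall>(x, y) \<in> pop45. \<pi> ! (i y - 1) < \<pi> ! (i x - 1)"
    unfolding contains_pop_def by blast
  have "i 1 < i 2" "i 2 < i 3" "i 3 < i 4" "i 4 < i 5"
    using mono by (simp_all add: strict_mono_on_def)
  moreover have "1 \<le> i 1" "i 5 \<le> length \<pi>"
    using range[THEN subsetD, of "i 1"] range[THEN subsetD, of "i 5"] by auto
  ultimately have "i 1 - 1 < i 2 - 1" "i 2 - 1 < i 3 - 1" "i 3 - 1 < i 4 - 1"
    "i 4 - 1 < length (butlast \<pi>)" "i 4 - 1 < length \<pi> - 1"
    by simp_all
  moreover have "\<pi> ! (i 2 - 1) < \<pi> ! (i 1 - 1)" "\<pi> ! (i 3 - 1) < \<pi> ! (i 1 - 1)"
    "\<pi> ! (i 2 - 1) < \<pi> ! (i 4 - 1)" "\<pi> ! (i 3 - 1) < \<pi> ! (i 4 - 1)"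
    using rel by (simp_all add: pop45_def)
  ultimately show "double_dip (butlast \<pi>)"
    unfolding double_dip_def
    by (intro exI[of _ "i 1 - 1"] exI[of _ "i 2 - 1"] exI[of _ "i 3 - 1"] exI[of _ "i 4 - 1"])
      (simp add: nth_butlast)
next
  assume "double_dip (butlast \<pi>)"
  then obtain a b c d where "a < b" "b < c" "c < d" "d < length (butlast \<pi>)"
    and dip: "butlast \<pi> ! b < butlast \<pi> ! a" "butlast \<pi> ! c < butlast \<pi> ! a"
      "butlast \<pi> ! b < butlast \<pi> ! d" "butlast \<pi> ! c < butlast \<pi> ! d"
    unfolding double_dip_def by blast
  define L where "L = [a + 1, b + 1, c + 1, d + 1, length \<pi>]"
  have "sorted_wrt (<) L" "set L \<subseteq> {1..length \<pi>}" "length L = 5"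
    unfolding L_def using \<open>a < b\<close> \<open>b < c\<close> \<open>c < d\<close> \<open>d < length (butlast \<pi>)\<close> by auto
  then have "strict_mono_on {1..5} (\<lambda>x. L ! (x - 1))"
    unfolding strict_mono_on_def by (auto simp: sorted_wrt_nth_less)
  moreover have "(\<lambda>x. L ! (x - 1)) ` {1..5} \<subseteq> {1..length \<pi>}"
  proof (rule image_subsetI)
    fix x :: nat
    assume "x \<in> {1..5}"
    then have "L ! (x - 1) \<in> set L"
      using \<open>length L = 5\<close> by (intro nth_mem) auto
    then show "L ! (x - 1) \<in> {1..length \<pi>}"
      using \<open>set L \<subseteq> {1..length \<pi>}\<close> by blast
  qed
  moreover have "\<forall>(x, y) \<in> pop45. \<pi> ! (L ! (y - 1) - 1) < \<pi> ! (L ! (x - 1) - 1)"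
    using dip \<open>a < b\<close> \<open>b < c\<close> \<open>c < d\<close> \<open>d < length (butlast \<pi>)\<close>
    by (simp add: pop45_def L_def nth_butlast)
  ultimately show "contains_pop \<pi> 5 pop45"
    unfolding contains_pop_def by blast
qed

lemma butlast_dip_free_eq_Sigma:
  assumes "A \<noteq> {}"
  shows "{\<pi>. distinct \<pi> \<and> set \<pi> = A \<and> \<not> double_dip (butlast \<pi>)}
    = (\<lambda>(v, ys). ys @ [v]) ` (SIGMA v:A. dip_free (A - {v}))"
proof (intro equalityI subsetI)
  fix \<pi>
  assume \<pi>: "\<pi> \<in> {\<pi>. distinct \<pi> \<and> set \<pi> = A \<and> \<not> double_dip (butlast \<pi>)}"
  then have "\<pi> \<noteq> []"
    using assms by auto
  then obtain ys v where "\<pi> = ys @ [v]"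
    by (cases \<pi> rule: rev_cases) auto
  with \<pi> show "\<pi> \<in> (\<lambda>(v, ys). ys @ [v]) ` (SIGMA v:A. dip_free (A - {v}))"
    unfolding dip_free_def by force
next
  fix \<pi>
  assume "\<pi> \<in> (\<lambda>(v, ys). ys @ [v]) ` (SIGMA v:A. dip_free (A - {v}))"
  then obtain v ys where "\<pi> = ys @ [v]" "v \<in> A" "ys \<in> dip_free (A - {v})"
    by auto
  then show "\<pi> \<in> {\<pi>. distinct \<pi> \<and> set \<pi> = A \<and> \<not> double_dip (butlast \<pi>)}"
    unfolding dip_free_def by (simp add: insert_absorb)
qed

lemma card_butlast_dip_free:
  assumes "finite A" and "A \<noteq> {}"
  shows "int (card {\<pi>. distinct \<pi> \<and> set \<pi> = A \<and> \<not> double_dip (butlast \<pi>)})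
    = int (card A) * dip_free_count (card A - 1)"
proof -
  have "inj_on (\<lambda>(v, ys). ys @ [v]) (SIGMA v:A. dip_free (A - {v}))"
    by (auto simp: inj_on_def)
  then have "card {\<pi>. distinct \<pi> \<and> set \<pi> = A \<and> \<not> double_dip (butlast \<pi>)}
      = (\<Sum>v\<in>A. card (dip_free (A - {v})))"
    unfolding butlast_dip_free_eq_Sigma[OF assms(2)]
    using assms(1) by (simp add: card_image card_SigmaI finite_dip_free)
  moreover have "int (card (dip_free (A - {v}))) = dip_free_count (card A - 1)" if "v \<in> A" for v
    using that assms(1) by (simp add: card_dip_free)
  ultimately show ?thesis
    by simp
qed

lemma fps_dip_free_count:
  "Abs_fps (\<lambda>n. of_int (dip_free_count n) :: 'a :: comm_ring_1) * (1 - 4 * fps_X + 2 * fps_X ^ 2)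
     = 1 - 3 * fps_X"
proof (rule fps_ext)
  fix n
  show "fps_nth (Abs_fps (\<lambda>n. of_int (dip_free_count n) :: 'a) * (1 - 4 * fps_X + 2 * fps_X ^ 2)) n
      = fps_nth (1 - 3 * fps_X :: 'a fps) n"
    by (cases n rule: dip_free_count.cases)
      (simp_all add: numeral_fps_const algebra_simps fps_X_power_mult_right_nth)
qed

lemma fps_weighted_shift_closed_form:
  fixes b :: "nat \<Rightarrow> 'a :: field"
  assumes "Abs_fps b * (1 - 4 * fps_X + 2 * fps_X ^ 2) = 1 - 3 * fps_X"
  shows "Abs_fps (\<lambda>n. if n = 0 then 1 else of_nat n * b (n - 1)) =
    (1 - 7 * fps_X + 14 * fps_X ^ 2 - 6 * fps_X ^ 3 + 4 * fps_X ^ 4)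
      / (1 - 4 * fps_X + 2 * fps_X ^ 2) ^ 2"
proof -
  define D :: "'a fps" where "D = 1 - 4 * fps_X + 2 * fps_X ^ 2"
  define G where "G = fps_X * Abs_fps b"
  have GD: "G * D = fps_X - 3 * fps_X ^ 2"
    unfolding G_def D_def mult.assoc assms by (simp add: algebra_simps power2_eq_square)
  then have "fps_deriv (G * D) = fps_deriv (fps_X - 3 * fps_X ^ 2)"
    by (simp only:)
  then have G': "fps_deriv G * D = 1 - 6 * fps_X - G * (4 * fps_X - 4)"
    unfolding D_def by (simp add: power2_eq_square algebra_simps)
  have A: "Abs_fps (\<lambda>n. if n = 0 then 1 else of_nat n * b (n - 1)) = 1 + fps_X * fps_deriv G"
    unfolding fps_mult_fps_X_deriv_shift G_def by (rule fps_ext) (simp add: fps_X_mult_nth)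
  have "(1 + fps_X * fps_deriv G) * D ^ 2 = D ^ 2 + fps_X * (fps_deriv G * D) * D"
    by (simp add: algebra_simps power2_eq_square)
  also have "\<dots> = D ^ 2 + fps_X * ((1 - 6 * fps_X) * D - G * D * (4 * fps_X - 4))"
    unfolding G' by (simp add: algebra_simps)
  also have "\<dots> = 1 - 7 * fps_X + 14 * fps_X ^ 2 - 6 * fps_X ^ 3 + 4 * fps_X ^ 4"
    unfolding GD unfolding D_def
    by (simp add: algebra_simps power2_eq_square power3_eq_cube power4_eq_xxxx)
  finally have numerator: "(1 + fps_X * fps_deriv G) * D ^ 2
      = 1 - 7 * fps_X + 14 * fps_X ^ 2 - 6 * fps_X ^ 3 + 4 * fps_X ^ 4" .
  have "fps_nth D 0 = 1"
    unfolding D_def by simp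
  then have "D ^ 2 \<noteq> 0"
    by auto
  then show ?thesis
    unfolding A D_def[symmetric] numerator[symmetric] by simp
qed

lemma card_avoiding_perms_pop45:
  "of_nat (card (avoiding_perms n 5 pop45))
     = (if n = 0 then 1 else of_nat n * of_int (dip_free_count (n - 1)) :: 'a :: comm_ring_1)"
proof -
  have avoiders: "avoiding_perms n 5 pop45
      = {\<pi>. distinct \<pi> \<and> set \<pi> = {1..n} \<and> \<not> double_dip (butlast \<pi>)}"
    by (auto simp: avoiding_perms_def perms_def contains_pop45_iff)
  show ?thesis
  proof (cases "n = 0")
    case True
    then have "avoiding_perms n 5 pop45 = {[]}"
      unfolding avoiders by (auto simp: double_dip_def)
    then show ?thesis
      using True by simp
  next
    case False
    then have "int (card (avoiding_perms n 5 pop45)) = int n * dip_free_count (n - 1)"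
      unfolding avoiders by (subst card_butlast_dip_free) auto
    then show ?thesis
      using False by (metis of_int_mult of_int_of_nat_eq)
  qed
qed

theorem theorem4p5:
  shows "Abs_fps (\<lambda>n. of_nat (card (avoiding_perms n 5 pop45)) :: rat) =
    (1 - 7 * fps_X + 14 * fps_X ^ 2 - 6 * fps_X ^ 3 + 4 * fps_X ^ 4)
      / (1 - 4 * fps_X + 2 * fps_X ^ 2) ^ 2"
  unfolding card_avoiding_perms_pop45
  by (rule fps_weighted_shift_closed_form[OF fps_dip_free_count])

end
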